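(* Let $N\in\mathbb{N}$, $N\geqslant2$, and let $f:[0,1]\times\mathbb{R}\to\mathbb{R}$ be continuous with continuous partial derivative $f_x$ with respect to the second variable, satisfying $\inf_{[0,1]\times\mathbb{R}}f_x>-1$. Then for every $x\in\mathbb{E}_N$ the linear operator $D_N'(x):\mathbb{E}_N\to\mathbb{E}_N$ is invertible.
   Context: $\mathbb{E}_N$ is the space of $x:\{0,\dots,N\}\to\mathbb{R}$ with $x(0)=x(N)=0$. $\Delta x(k-1)=x(k)-x(k-1)$, $\Delta^2x(k-1)=x(k+1)-2x(k)+x(k-1)$. $D_N:\mathbb{E}_N\to\mathbb{E}_N$ is $(D_Nx)(k)=\Delta^2x(k-1)-\frac{1}{N^2}f(\frac kN,x(k))$ for $k=1,\dots,N-1$, $(D_Nx)(0)=(D_Nx)(N)=0$; its derivative at $x$ is $D_N'(x)h(k)=\Delta^2h(k-1)-\frac{1}{N^2}f_x(\frac kN,x(k))h(k)$ for $k=1,\dots,N-1$ and $0$ at $k=0,N$. *)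

theory Defs
  imports "HOL-Analysis.Analysis"
begin

text \<open>The space E_N: functions on {0..N} (represented as nat => real, zero beyond N)
  vanishing at 0 and N.\<close>
definition EN :: "nat \<Rightarrow> (nat \<Rightarrow> real) set" where
  "EN N = {x. x 0 = 0 \<and> x N = 0 \<and> (\<forall>k>N. x k = 0)}"

text \<open>Second difference: Delta^2 x(k-1) = x(k+1) - 2 x(k) + x(k-1).\<close>
definition D2 :: "(nat \<Rightarrow> real) \<Rightarrow> nat \<Rightarrow> real" where
  "D2 x k = x (k + 1) - 2 * x k + x (k - 1)"

definition DN :: "(real \<Rightarrow> real \<Rightarrow> real) \<Rightarrow> nat \<Rightarrow> (nat \<Rightarrow> real) \<Rightarrow> (nat \<Rightarrow> real)" where
  "DN f N x = (\<lambda>k. if 1 \<le> k \<and> k \<le> N - 1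
      then D2 x k - f (real k / real N) (x k) / (real N)^2 else 0)"

text \<open>The derivative D_N'(x), where fx is the partial derivative of f w.r.t. its second argument.\<close>
definition DN' :: "(real \<Rightarrow> real \<Rightarrow> real) \<Rightarrow> nat \<Rightarrow> (nat \<Rightarrow> real) \<Rightarrow> (nat \<Rightarrow> real) \<Rightarrow> (nat \<Rightarrow> real)" where
  "DN' fx N x h = (\<lambda>k. if 1 \<le> k \<and> k \<le> N - 1
      then D2 h k - fx (real k / real N) (x k) * h k / (real N)^2 else 0)"

end

theory Submission
  imports Defs
begin

text \<open>With \<open>c k = f\<^sub>x (k/N, x k) > -1\<close>, the derivative is \<open>h \<mapsto> \<Delta>\<^sup>2h - c h / N\<^sup>2\<close> on the interior
  nodes. Summation by parts gives \<open>\<Sum> h\<^sub>k \<Delta>\<^sup>2h(k-1) = -\<Sum> (\<Delta>h)\<^sup>2\<close>, and writing \<open>h\<^sub>k\<close> as a sum of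
  increments, Cauchy-Schwarz gives the discrete Poincare inequality \<open>\<Sum> h\<^sub>k\<^sup>2 \<le> N\<^sup>2 \<Sum> (\<Delta>h)\<^sup>2\<close>.
  Together they show \<open>\<Sum> (1 + c\<^sub>k) h\<^sub>k\<^sup>2 \<le> 0\<close> for every \<open>h\<close> in the kernel, so the kernel is trivial.
  For surjectivity solve the recurrence forward from \<open>h 0 = 0\<close>, \<open>h 1 = s\<close>: the value at \<open>N\<close> is
  affine in \<open>s\<close> with nonzero slope, since otherwise the solution with \<open>s = 1\<close> and zero right-hand
  side would be a nonzero kernel element.\<close>

definition D2_pot :: "(nat \<Rightarrow> real) \<Rightarrow> nat \<Rightarrow> (nat \<Rightarrow> real) \<Rightarrow> nat \<Rightarrow> real" where
  "D2_pot c N h = (\<lambda>k. if 1 \<le> k \<and> k \<le> N - 1 then D2 h k - c k * h k / (real N)^2 else 0)"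

lemma DN'_eq_D2_pot: "DN' fx N x = D2_pot (\<lambda>k. fx (real k / real N) (x k)) N"
  by (simp add: DN'_def D2_pot_def fun_eq_iff)

lemma D2_pot_in_EN: "D2_pot c N h \<in> EN N"
  by (auto simp: D2_pot_def EN_def)

lemma D2_pot_diff: "D2_pot c N (\<lambda>k. h1 k - h2 k) k = D2_pot c N h1 k - D2_pot c N h2 k"
  by (simp add: D2_pot_def D2_def algebra_simps diff_divide_distrib)

lemma D2_pot_truncate: "D2_pot c N (\<lambda>k. if k \<le> N then h k else 0) = D2_pot c N h"
  by (auto simp: D2_pot_def D2_def fun_eq_iff)

lemma sq_le_mult_sum_sq_diffs:
  fixes h :: "nat \<Rightarrow> real"
  assumes "h 0 = 0" and "k \<le> N"
  shows "(h k)^2 \<le> real k * (\<Sum>j<N. (h (Suc j) - h j)^2)"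
proof -
  have "(h k)^2 = (\<Sum>j<k. h (Suc j) - h j)^2"
    using assms(1) by (simp add: sum_lessThan_telescope)
  also have "\<dots> \<le> real k * (\<Sum>j<k. (h (Suc j) - h j)^2)"
    using sum_squared_le_sum_of_squares[of "\<lambda>j. h (Suc j) - h j" "{..<k}"] by (simp add: mult.commute)
  also have "\<dots> \<le> real k * (\<Sum>j<N. (h (Suc j) - h j)^2)"
    using assms(2) by (intro mult_left_mono sum_mono2) auto
  finally show ?thesis .
qed

lemma discrete_poincare:
  fixes h :: "nat \<Rightarrow> real"
  assumes "h 0 = 0"
  shows "(\<Sum>k=1..N-1. (h k)^2) \<le> (real N)^2 * (\<Sum>j<N. (h (Suc j) - h j)^2)"
proof -
  define S where "S = (\<Sum>j<N. (h (Suc j) - h j)^2)"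
  have S: "S \<ge> 0" by (simp add: S_def sum_nonneg)
  have "(\<Sum>k=1..N-1. (h k)^2) \<le> real (card {1..N-1}) * (real N * S)"
  proof (rule sum_bounded_above)
    fix k assume "k \<in> {1..N-1}"
    then have "k \<le> N" by auto
    then have "(h k)^2 \<le> real k * S" using sq_le_mult_sum_sq_diffs[of h, OF assms] by (simp add: S_def)
    also have "\<dots> \<le> real N * S" using \<open>k \<le> N\<close> S by (simp add: mult_right_mono)
    finally show "(h k)^2 \<le> real N * S" .
  qed
  also have "\<dots> \<le> real N * (real N * S)"
    using S by (intro mult_right_mono) auto
  finally show ?thesis by (simp add: S_def power2_eq_square)
qed

lemma sum_mult_D2:
  fixes h :: "nat \<Rightarrow> real"
  assumes "h 0 = 0"
  shows "(\<Sum>k=1..n. h k * D2 h k) = h n * (h (Suc n) - h n) - (\<Sum>k<n. (h (Suc k) - h k)^2)"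
proof (induction n)
  case 0
  then show ?case using assms by simp
next
  case (Suc n)
  then show ?case by (simp add: D2_def power2_eq_square algebra_simps)
qed

lemma sum_mult_D2_boundary_zero:
  fixes h :: "nat \<Rightarrow> real"
  assumes "h 0 = 0" and "h N = 0"
  shows "(\<Sum>k=1..N-1. h k * D2 h k) = - (\<Sum>k<N. (h (Suc k) - h k)^2)"
proof (cases N)
  case (Suc m)
  then show ?thesis
    using sum_mult_D2[of h m] assms by (simp add: power2_eq_square algebra_simps)
qed simp

lemma D2_pot_kernel:
  fixes h c :: "nat \<Rightarrow> real"
  assumes h: "h \<in> EN N"
    and c: "\<And>k. 1 \<le> k \<Longrightarrow> k \<le> N - 1 \<Longrightarrow> c k > -1"
    and ker: "D2_pot c N h = (\<lambda>_. 0)"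
  shows "h = (\<lambda>_. 0)"
proof -
  have h0: "h 0 = 0" and hN: "h N = 0" and hb: "\<And>k. k > N \<Longrightarrow> h k = 0"
    using h by (auto simp: EN_def)
  define S where "S = (\<Sum>k<N. (h (Suc k) - h k)^2)"
  have "(\<Sum>k=1..N-1. c k * (h k)^2) = (\<Sum>k=1..N-1. (real N)^2 * (h k * D2 h k))"
  proof (rule sum.cong)
    fix k assume k: "k \<in> {1..N-1}"
    then have "D2 h k = c k * h k / (real N)^2"
      using fun_cong[OF ker, of k] by (simp add: D2_pot_def)
    moreover have "real N \<noteq> 0" using k by auto
    ultimately show "c k * (h k)^2 = (real N)^2 * (h k * D2 h k)"
      by (simp add: power2_eq_square)
  qed simp
  also have "\<dots> = - ((real N)^2 * S)"
    using sum_mult_D2_boundary_zero[OF h0 hN] by (simp add: S_def flip: sum_distrib_left)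
  finally have "(\<Sum>k=1..N-1. (1 + c k) * (h k)^2) = (\<Sum>k=1..N-1. (h k)^2) - (real N)^2 * S"
    by (simp add: algebra_simps sum.distrib)
  also have "\<dots> \<le> 0"
    using discrete_poincare[of h N, OF h0] by (simp add: S_def)
  finally have le0: "(\<Sum>k=1..N-1. (1 + c k) * (h k)^2) \<le> 0" .
  have pos: "1 + c k > 0" if "k \<in> {1..N-1}" for k
    using c[of k] that by simp
  then have nonneg: "\<forall>k\<in>{1..N-1}. (1 + c k) * (h k)^2 \<ge> 0"
    by (simp add: less_imp_le)
  then have "(\<Sum>k=1..N-1. (1 + c k) * (h k)^2) = 0"
    using le0 by (meson antisym sum_nonneg)
  then have "(1 + c k) * (h k)^2 = 0" if "k \<in> {1..N-1}" for k
    using sum_nonneg_eq_0_iff[of "{1..N-1}" "\<lambda>k. (1 + c k) * (h k)^2"] nonneg that by blast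
  then have "h k = 0" if "k \<in> {1..N-1}" for k
    using pos[OF that] that by fastforce
  moreover have "k \<notin> {1..N-1} \<Longrightarrow> h k = 0" for k
    using h0 hN hb by (cases "k = 0"; cases k N rule: linorder_cases) auto
  ultimately show ?thesis by (auto simp: fun_eq_iff)
qed

lemma D2_pot_inj_on:
  assumes "\<And>k. 1 \<le> k \<Longrightarrow> k \<le> N - 1 \<Longrightarrow> c k > -1"
  shows "inj_on (D2_pot c N) (EN N)"
proof (rule inj_onI)
  fix h1 h2 assume "h1 \<in> EN N" "h2 \<in> EN N" "D2_pot c N h1 = D2_pot c N h2"
  then have "(\<lambda>k. h1 k - h2 k) \<in> EN N" "D2_pot c N (\<lambda>k. h1 k - h2 k) = (\<lambda>_. 0)"
    by (auto simp: EN_def D2_pot_diff)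
  then have "(\<lambda>k. h1 k - h2 k) = (\<lambda>_. 0)" using D2_pot_kernel assms by blast
  then show "h1 = h2" by (simp add: fun_eq_iff)
qed

fun shoot :: "(nat \<Rightarrow> real) \<Rightarrow> nat \<Rightarrow> (nat \<Rightarrow> real) \<Rightarrow> real \<Rightarrow> nat \<Rightarrow> real" where
  "shoot c N g s 0 = 0"
| "shoot c N g s (Suc 0) = s"
| "shoot c N g s (Suc (Suc k)) = 2 * shoot c N g s (Suc k) - shoot c N g s k
     + c (Suc k) * shoot c N g s (Suc k) / (real N)^2 + g (Suc k)"

lemma shoot_affine: "shoot c N g s k = s * shoot c N (\<lambda>_. 0) 1 k + shoot c N g 0 k"
  by (induction c N g s k rule: shoot.induct) (auto simp: algebra_simps add_divide_distrib)

lemma D2_pot_shoot: "D2_pot c N (shoot c N g s) k = (if 1 \<le> k \<and> k \<le> N - 1 then g k else 0)"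
  by (cases k) (auto simp: D2_pot_def D2_def)

lemma D2_pot_truncated_shoot:
  assumes "g \<in> EN N"
  shows "D2_pot c N (\<lambda>k. if k \<le> N then shoot c N g s k else 0) = g"
proof
  fix k
  have "g k = 0" if "\<not> (1 \<le> k \<and> k \<le> N - 1)"
    using assms that by (cases "k = 0"; cases k N rule: linorder_cases) (auto simp: EN_def)
  then show "D2_pot c N (\<lambda>k. if k \<le> N then shoot c N g s k else 0) k = g k"
    by (simp add: D2_pot_truncate D2_pot_shoot)
qed

lemma D2_pot_surj:
  assumes "N \<ge> 1" and c: "\<And>k. 1 \<le> k \<Longrightarrow> k \<le> N - 1 \<Longrightarrow> c k > -1"
  shows "EN N \<subseteq> D2_pot c N ` EN N"
proof
  fix g assume g: "g \<in> EN N"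
  define p where "p = shoot c N (\<lambda>_. 0) 1"
  define q where "q = shoot c N g 0"
  have "p N \<noteq> 0"
  proof
    assume "p N = 0"
    then have "(\<lambda>k. if k \<le> N then p k else 0) \<in> EN N"
      by (simp add: EN_def p_def)
    moreover have "D2_pot c N (\<lambda>k. if k \<le> N then p k else 0) = (\<lambda>_. 0)"
      unfolding p_def by (rule D2_pot_truncated_shoot) (simp add: EN_def)
    ultimately have "(\<lambda>k. if k \<le> N then p k else 0) = (\<lambda>_. 0)"
      using D2_pot_kernel c by blast
    then show False
      using fun_cong[of _ _ 1] \<open>N \<ge> 1\<close> by (fastforce simp: p_def)
  qed
  define u where "u = shoot c N g (- q N / p N)"
  have "u N = 0"
    using \<open>p N \<noteq> 0\<close> by (simp add: u_def shoot_affine[of c N g] p_def[symmetric] q_def[symmetric])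
  then have "(\<lambda>k. if k \<le> N then u k else 0) \<in> EN N"
    by (simp add: EN_def u_def)
  moreover have "D2_pot c N (\<lambda>k. if k \<le> N then u k else 0) = g"
    unfolding u_def by (rule D2_pot_truncated_shoot[OF g])
  ultimately show "g \<in> D2_pot c N ` EN N" by (metis image_eqI)
qed

lemma bij_betw_D2_pot:
  assumes "N \<ge> 1" and "\<And>k. 1 \<le> k \<Longrightarrow> k \<le> N - 1 \<Longrightarrow> c k > -1"
  shows "bij_betw (D2_pot c N) (EN N) (EN N)"
  using D2_pot_inj_on[of N c, OF assms(2)] D2_pot_surj[of N c, OF assms] D2_pot_in_EN[of c N]
  by (auto simp: bij_betw_def)

theorem lemma10:
  fixes N :: nat and f fx :: "real \<Rightarrow> real \<Rightarrow> real" and x :: "nat \<Rightarrow> real"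
  assumes "N \<ge> 2"
    and "continuous_on ({0..1} \<times> UNIV) (\<lambda>(t, y). f t y)"
    and "continuous_on ({0..1} \<times> UNIV) (\<lambda>(t, y). fx t y)"
    and "\<And>t y. t \<in> {0..1} \<Longrightarrow> ((\<lambda>z. f t z) has_real_derivative fx t y) (at y)"
    and "bdd_below ((\<lambda>(t, y). fx t y) ` ({0..1} \<times> UNIV))"
    and "(INF p\<in>{0..1} \<times> UNIV. fx (fst p) (snd p)) > -1"
    and "x \<in> EN N"
  shows "bij_betw (DN' fx N x) (EN N) (EN N)"
proof -
  have fx_gt: "fx t y > -1" if "t \<in> {0..1}" for t y
    using less_cINF_D[of "\<lambda>p. fx (fst p) (snd p)" "{0..1} \<times> UNIV" "-1" "(t, y)"] assms(5,6) that
    by (simp add: case_prod_beta')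
  have "fx (real k / real N) (x k) > -1" if "1 \<le> k" "k \<le> N - 1" for k
    using that assms(1) by (intro fx_gt) (simp add: divide_le_eq_1)
  then show ?thesis
    unfolding DN'_eq_D2_pot using assms(1) by (intro bij_betw_D2_pot) auto
qed

end
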